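(* With the notation below, let $I_n=\langle x_1,\ldots,x_n\rangle\subseteq S$. Then $H_0(\mathcal{FK}_\bullet(x_1,\ldots,x_n))\cong S/I_n$ as left $S[\Theta;\varphi]$-modules, and $H_{n+1}(\mathcal{FK}_\bullet(x_1,\ldots,x_n))=0$ (i.e. $\partial_{n+1}$ is injective).
   Context: Let $\mathbb{K}$ be a commutative ring and $S=\mathbb{K}[x_1,\ldots,x_n]$. Let $\varphi:S\to S$ be a flat $\mathbb{K}$-algebra endomorphism with $\varphi(x_i)\in\langle x_i\rangle$ for each $i$, and fix nonzero $s_1,\ldots,s_n\in S$ with $\varphi(x_i)=s_ix_i$. The left skew polynomial ring $S[\Theta;\varphi]$ is the ring which is a free left $S$-module with basis $\{\Theta^i\}_{i\geq0}$ and multiplication determined by $\Theta a=\varphi(a)\Theta$ for $a\in S$. $S/I_n$ is a left $S[\Theta;\varphi]$-module with $S$ acting naturally and $\Theta$ acting by the map induced by $\varphi$ (well defined since $\varphi(I_n)\subseteq I_n$). For $J=\{j_1<\cdots<j_k\}\subseteq\{1,\ldots,n\}$ write $s_J=s_{j_1}\cdots s_{j_k}$ (with $s_\emptyset=1$) and $\mathbf{e}_J=\mathbf{e}_{j_1}\wedge\cdots\wedge\mathbf{e}_{j_k}$. The $\varphi$-Koszul complex $\mathcal{FK}_\bullet(x_1,\ldots,x_n)$ is defined as follows: for $0\leq l\leq n+1$, $\mathcal{FK}_l$ is the free left $S[\Theta;\varphi]$-module with basis $\{\mathbf{e}_I : |I|=l\}\cup\{\mathbf{e}_J\wedge u : |J|=l-1\}$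 (so $\mathcal{FK}_0=S[\Theta;\varphi]$ with basis $\mathbf{e}_\emptyset$, and $\mathcal{FK}_{n+1}$ has the single basis element $\mathbf{e}_{\{1,\ldots,n\}}\wedge u$), and $\partial_l:\mathcal{FK}_l\to\mathcal{FK}_{l-1}$ ($1\le l\le n+1$; $\partial_0=\partial_{n+2}=0$) is the left $S[\Theta;\varphi]$-linear map given on basis elements by $\partial_l(\mathbf{e}_I)=\sum_{r=1}^{l}(-1)^{r-1}x_{i_r}\,\mathbf{e}_{I\setminus\{i_r\}}$ for $I=\{i_1<\cdots<i_l\}$, and $\partial_l(\mathbf{e}_J\wedge u)=(-1)^{l-1}(\Theta-s_J)\,\mathbf{e}_J+\sum_{r=1}^{l-1}(-1)^{r-1}\varphi(x_{j_r})\,\mathbf{e}_{J\setminus\{j_r\}}\wedge u$ for $J=\{j_1<\cdots<j_{l-1}\}$ (in particular $\partial_1(u)=\Theta-1$). Homology is $H_l=\ker\partial_l/\operatorname{im}\partial_{l+1}$. *)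

theory Defs
  imports "HOL-Library.Poly_Mapping" "HOL-Library.Function_Algebras"
begin

text \<open>The polynomial ring S = K[x_v : v in 'v], where the variables are indexed by a
  finite linearly ordered type 'v (so n = CARD('v) and the order of 'v plays the role
  of the order 1 < 2 < ... < n).\<close>

type_synonym ('v, 'k) mpoly = "('v \<Rightarrow>\<^sub>0 nat) \<Rightarrow>\<^sub>0 'k"

definition Var :: "'v \<Rightarrow> ('v, 'k::comm_ring_1) mpoly" where
  "Var v = Poly_Mapping.single (Poly_Mapping.single v 1) 1"

definition Const :: "'k \<Rightarrow> ('v, 'k::comm_ring_1) mpoly" where
  "Const c = Poly_Mapping.single 0 c"

definition var_ideal :: "('v::finite, 'k::comm_ring_1) mpoly set" where
  "var_ideal = {p. \<exists>a. p = (\<Sum>v\<in>UNIV. a v * Var v)}"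

definition alg_endo :: "(('v, 'k::comm_ring_1) mpoly \<Rightarrow> ('v, 'k) mpoly) \<Rightarrow> bool" where
  "alg_endo \<phi> \<longleftrightarrow> (\<forall>p q. \<phi> (p + q) = \<phi> p + \<phi> q) \<and> (\<forall>p q. \<phi> (p * q) = \<phi> p * \<phi> q)
     \<and> \<phi> 1 = 1 \<and> (\<forall>c. \<phi> (Const c) = Const c)"

text \<open>Flatness of \<phi>: S regarded as a module over itself via \<phi> (r . m = \<phi> r * m)
  is flat.  Expressed by the equational criterion of flatness (Stacks 00HK), since
  tensor products are not available in the library.\<close>
definition flat_endo :: "(('v, 'k::comm_ring_1) mpoly \<Rightarrow> ('v, 'k) mpoly) \<Rightarrow> bool" where
  "flat_endo \<phi> \<longleftrightarrow>
    (\<forall>(k::nat) (a::nat \<Rightarrow> ('v,'k) mpoly) (m::nat \<Rightarrow> ('v,'k) mpoly).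
       (\<Sum>i<k. \<phi> (a i) * m i) = 0 \<longrightarrow>
       (\<exists>(l::nat) (b::nat \<Rightarrow> nat \<Rightarrow> ('v,'k) mpoly) (y::nat \<Rightarrow> ('v,'k) mpoly).
          (\<forall>i<k. m i = (\<Sum>j<l. \<phi> (b i j) * y j)) \<and>
          (\<forall>j<l. (\<Sum>i<k. a i * b i j) = 0)))"

text \<open>The left skew polynomial ring S[\<Theta>;\<phi>]: an element is a finitely supported
  sequence of coefficients f, standing for sum_i f_i \<Theta>^i.
  Multiplication: (a \<Theta>^i)(b \<Theta>^j) = a \<phi>^i(b) \<Theta>^(i+j).\<close>
type_synonym ('v, 'k) skew = "nat \<Rightarrow>\<^sub>0 ('v, 'k) mpoly"

definition skew_mult :: "(('v, 'k::comm_ring_1) mpoly \<Rightarrow> ('v, 'k) mpoly) \<Rightarrow>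
    ('v, 'k) skew \<Rightarrow> ('v, 'k) skew \<Rightarrow> ('v, 'k) skew" where
  "skew_mult \<phi> f g = Abs_poly_mapping
     (\<lambda>k. \<Sum>i\<le>k. Poly_Mapping.lookup f i * (\<phi> ^^ i) (Poly_Mapping.lookup g (k - i)))"

definition skew_const :: "('v, 'k::comm_ring_1) mpoly \<Rightarrow> ('v, 'k) skew" where
  "skew_const a = Poly_Mapping.single 0 a"

definition Theta :: "('v, 'k::comm_ring_1) skew" where
  "Theta = Poly_Mapping.single 1 1"

definition S_act :: "(('v, 'k::comm_ring_1) mpoly \<Rightarrow> ('v, 'k) mpoly) \<Rightarrow>
    ('v, 'k) skew \<Rightarrow> ('v, 'k) mpoly \<Rightarrow> ('v, 'k) mpoly" where
  "S_act \<phi> r p = (\<Sum>i\<in>Poly_Mapping.keys r. Poly_Mapping.lookup r i * (\<phi> ^^ i) p)"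

text \<open>All modules FK_l are collected in one free module with
  basis indexed by pairs (J, b): (I, False) stands for e_I and (J, True) for e_J \<and> u.\<close>
type_synonym ('v, 'k) chain = "'v set \<times> bool \<Rightarrow> ('v, 'k) skew"

definition bdeg :: "'v set \<times> bool \<Rightarrow> nat" where
  "bdeg ix = card (fst ix) + (if snd ix then 1 else 0)"

definition FK :: "nat \<Rightarrow> ('v::finite, 'k::comm_ring_1) chain set" where
  "FK l = {c. \<forall>ix. c ix \<noteq> 0 \<longrightarrow> bdeg ix = l}"

definition chain_smul :: "(('v, 'k::comm_ring_1) mpoly \<Rightarrow> ('v, 'k) mpoly) \<Rightarrow>
    ('v, 'k) skew \<Rightarrow> ('v, 'k) chain \<Rightarrow> ('v, 'k) chain" where
  "chain_smul \<phi> r c = (\<lambda>ix. skew_mult \<phi> r (c ix))"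

definition basis_vec :: "'v set \<times> bool \<Rightarrow> ('v, 'k::comm_ring_1) chain" where
  "basis_vec ix = (\<lambda>jx. if jx = ix then skew_const 1 else 0)"

definition sgn_pos :: "'v::linorder set \<Rightarrow> 'v \<Rightarrow> ('v, 'k::comm_ring_1) mpoly" where
  "sgn_pos I i = (-1) ^ card {j\<in>I. j < i}"

definition s_prod :: "('v \<Rightarrow> ('v, 'k::comm_ring_1) mpoly) \<Rightarrow> 'v set \<Rightarrow> ('v, 'k) mpoly" where
  "s_prod s J = (\<Prod>j\<in>J. s j)"

definition bd_basis :: "(('v::{finite,linorder}, 'k::comm_ring_1) mpoly \<Rightarrow> ('v, 'k) mpoly) \<Rightarrow>
    ('v \<Rightarrow> ('v, 'k) mpoly) \<Rightarrow> 'v set \<times> bool \<Rightarrow> ('v, 'k) chain" where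
  "bd_basis \<phi> s ix =
    (if \<not> snd ix then
       (\<Sum>i\<in>fst ix. chain_smul \<phi> (skew_const (sgn_pos (fst ix) i * Var i))
                        (basis_vec (fst ix - {i}, False)))
     else
       chain_smul \<phi> (skew_mult \<phi> (skew_const ((-1) ^ card (fst ix))) (Theta - skew_const (s_prod s (fst ix))))
                    (basis_vec (fst ix, False))
       + (\<Sum>j\<in>fst ix. chain_smul \<phi> (skew_const (sgn_pos (fst ix) j * \<phi> (Var j)))
                        (basis_vec (fst ix - {j}, True))))"

text \<open>The differential, extended S[\<Theta>;\<phi>]-linearly.  Its restriction to FK l is \<partial>_l.\<close>
definition bd :: "(('v::{finite,linorder}, 'k::comm_ring_1) mpoly \<Rightarrow> ('v, 'k) mpoly) \<Rightarrow>
    ('v \<Rightarrow> ('v, 'k) mpoly) \<Rightarrow> ('v, 'k) chain \<Rightarrow> ('v, 'k) chain" where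
  "bd \<phi> s c = (\<Sum>ix\<in>UNIV. chain_smul \<phi> (c ix) (bd_basis \<phi> s ix))"

text \<open>Isomorphism of quotient modules M/N \<cong> M'/N' (left modules over the same ring,
  with actions act and act'), expressed through a map on representatives inducing an
  R-linear bijection M/N \<rightarrow> M'/N'.\<close>
definition quot_iso ::
  "'a::ab_group_add set \<Rightarrow> 'a set \<Rightarrow> ('r \<Rightarrow> 'a \<Rightarrow> 'a) \<Rightarrow>
   'b::ab_group_add set \<Rightarrow> 'b set \<Rightarrow> ('r \<Rightarrow> 'b \<Rightarrow> 'b) \<Rightarrow> bool" where
  "quot_iso M N act M' N' act' \<longleftrightarrow>
     (\<exists>F. (\<forall>a\<in>M. F a \<in> M') \<and>
          (\<forall>a\<in>M. \<forall>b\<in>M. F (a + b) - (F a + F b) \<in> N') \<and>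
          (\<forall>r. \<forall>a\<in>M. F (act r a) - act' r (F a) \<in> N') \<and>
          (\<forall>a\<in>M. F a \<in> N' \<longleftrightarrow> a \<in> N) \<and>
          (\<forall>b\<in>M'. \<exists>a\<in>M. F a - b \<in> N'))"

end

theory Submission
  imports Defs "HOL-Library.Infinite_Set"
begin

text \<open>Evaluating at 1 (through the action of S[\<Theta>;\<phi>] on S) maps FK_0 = S[\<Theta>;\<phi>] onto S.
  Since \<Theta>^i - 1 = (1 + \<Theta> + ... + \<Theta>^(i-1))(\<Theta> - 1), every g is congruent to the constant g(1)
  modulo the left ideal generated by \<Theta> - 1; and a left multiple r x_v evaluates to r(x_v), which
  lies in \<langle>x_v\<rangle> because \<phi> maps \<langle>x_v\<rangle> into itself. Hence the image of \<partial>_1, the left ideal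
  generated by the x_v and \<Theta> - 1, is exactly the set of g with g(1) \<in> I_n, giving H_0 \<cong> S/I_n.
  The top differential \<partial>_(n+1) is right multiplication by \<plusminus>(\<Theta> - s_{1..n}), whose leading
  coefficient is a unit; comparing top coefficients shows it is injective.\<close>

lemma alg_endo_add: "alg_endo \<phi> \<Longrightarrow> \<phi> (p + q) = \<phi> p + \<phi> q"
  and alg_endo_mult: "alg_endo \<phi> \<Longrightarrow> \<phi> (p * q) = \<phi> p * \<phi> q"
  and alg_endo_one: "alg_endo \<phi> \<Longrightarrow> \<phi> 1 = 1"
  unfolding alg_endo_def by blast+

lemma alg_endo_zero: "alg_endo \<phi> \<Longrightarrow> \<phi> 0 = 0"
  by (metis add_cancel_right_right alg_endo_add)

lemma alg_endo_uminus: "alg_endo \<phi> \<Longrightarrow> \<phi> (- p) = - \<phi> p"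
  by (metis add.right_inverse alg_endo_add alg_endo_zero add_eq_0_iff)

lemma alg_endo_sum: "alg_endo \<phi> \<Longrightarrow> \<phi> (sum g A) = (\<Sum>a\<in>A. \<phi> (g a))"
  using sum_comp_morphism[of \<phi> g A] by (simp add: alg_endo_zero alg_endo_add o_def)

lemma alg_endo_inverse: "alg_endo \<phi> \<Longrightarrow> u * v = 1 \<Longrightarrow> \<phi> u * \<phi> v = 1"
  by (metis alg_endo_mult alg_endo_one)

lemma alg_endo_funpow: "alg_endo \<phi> \<Longrightarrow> alg_endo (\<phi> ^^ i)"
  by (induction i) (simp_all add: alg_endo_def)

lemma keys_subset_lessThan: "\<exists>N. Poly_Mapping.keys (f :: nat \<Rightarrow>\<^sub>0 'a::zero) \<subseteq> {..<N}"
  using finite_nat_bounded finite_keys by blast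

lemma skew_conv_vanishes:
  assumes "alg_endo \<phi>" "Poly_Mapping.keys f \<subseteq> {..<A}" "Poly_Mapping.keys g \<subseteq> {..<B}" "A + B \<le> k"
  shows "(\<Sum>i\<le>k. Poly_Mapping.lookup f i * (\<phi> ^^ i) (Poly_Mapping.lookup g (k - i))) = 0"
proof (intro sum.neutral ballI)
  fix i assume "i \<in> {..k}"
  have "i \<notin> Poly_Mapping.keys f \<or> k - i \<notin> Poly_Mapping.keys g"
  proof (rule ccontr)
    assume "\<not> ?thesis"
    then have "i < A" "k - i < B" using assms(2,3) by auto
    with \<open>i \<in> {..k}\<close> assms(4) show False by simp
  qed
  then show "Poly_Mapping.lookup f i * (\<phi> ^^ i) (Poly_Mapping.lookup g (k - i)) = 0"
    by (auto simp: in_keys_iff alg_endo_zero[OF alg_endo_funpow[OF assms(1)]])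
qed

lemma lookup_skew_mult:
  assumes "alg_endo \<phi>"
  shows "Poly_Mapping.lookup (skew_mult \<phi> f g) k
       = (\<Sum>i\<le>k. Poly_Mapping.lookup f i * (\<phi> ^^ i) (Poly_Mapping.lookup g (k - i)))"
proof -
  obtain A B where "Poly_Mapping.keys f \<subseteq> {..<A}" "Poly_Mapping.keys g \<subseteq> {..<B}"
    using keys_subset_lessThan by blast
  from skew_conv_vanishes[OF assms this]
  have "{k. (\<Sum>i\<le>k. Poly_Mapping.lookup f i * (\<phi> ^^ i) (Poly_Mapping.lookup g (k - i))) \<noteq> 0}
      \<subseteq> {..<A + B}"
    using not_less by blast
  then have "finite {k. (\<Sum>i\<le>k. Poly_Mapping.lookup f i * (\<phi> ^^ i) (Poly_Mapping.lookup g (k - i))) \<noteq> 0}"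
    by (rule finite_subset) simp
  then show ?thesis
    unfolding skew_mult_def by simp
qed

lemma keys_skew_mult_subset:
  assumes "alg_endo \<phi>" "Poly_Mapping.keys f \<subseteq> {..<A}" "Poly_Mapping.keys g \<subseteq> {..<B}"
  shows "Poly_Mapping.keys (skew_mult \<phi> f g) \<subseteq> {..<A + B}"
proof
  fix k assume "k \<in> Poly_Mapping.keys (skew_mult \<phi> f g)"
  then show "k \<in> {..<A + B}"
    using skew_conv_vanishes[OF assms, of k]
    by (cases "A + B \<le> k") (auto simp: in_keys_iff lookup_skew_mult[OF assms(1)])
qed

lemma lookup_skew_mult_const_left:
  assumes "alg_endo \<phi>"
  shows "Poly_Mapping.lookup (skew_mult \<phi> (skew_const a) g) k = a * Poly_Mapping.lookup g k"
proof -
  have "Poly_Mapping.lookup (skew_mult \<phi> (skew_const a) g) k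
      = (\<Sum>i\<le>k. if i = 0 then a * Poly_Mapping.lookup g k else 0)"
    unfolding lookup_skew_mult[OF assms]
    by (rule sum.cong) (auto simp: skew_const_def lookup_single)
  then show ?thesis by simp
qed

lemma skew_mult_const_one_left: "alg_endo \<phi> \<Longrightarrow> skew_mult \<phi> (skew_const 1) f = f"
  by (rule poly_mapping_eqI) (simp add: lookup_skew_mult_const_left)

lemma skew_mult_const_one_right:
  assumes "alg_endo \<phi>"
  shows "skew_mult \<phi> f (skew_const 1) = f"
proof (rule poly_mapping_eqI)
  fix k
  have "Poly_Mapping.lookup (skew_mult \<phi> f (skew_const 1)) k
      = (\<Sum>i\<le>k. if i = k then Poly_Mapping.lookup f i else 0)"
    unfolding lookup_skew_mult[OF assms]
    by (rule sum.cong) (auto simp: skew_const_def lookup_single lookup_one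
        alg_endo_one[OF alg_endo_funpow[OF assms]] alg_endo_zero[OF alg_endo_funpow[OF assms]])
  then show "Poly_Mapping.lookup (skew_mult \<phi> f (skew_const 1)) k = Poly_Mapping.lookup f k"
    by simp
qed

lemma skew_mult_const_const:
  "alg_endo \<phi> \<Longrightarrow> skew_mult \<phi> (skew_const a) (skew_const b) = skew_const (a * b)"
  by (rule poly_mapping_eqI)
    (simp only: lookup_skew_mult_const_left, simp add: skew_const_def lookup_single when_def)

lemma skew_mult_zero_left: "alg_endo \<phi> \<Longrightarrow> skew_mult \<phi> 0 f = 0"
  by (rule poly_mapping_eqI) (simp add: lookup_skew_mult)

lemma skew_mult_zero_right: "alg_endo \<phi> \<Longrightarrow> skew_mult \<phi> f 0 = 0"
  by (rule poly_mapping_eqI) (simp add: lookup_skew_mult alg_endo_zero[OF alg_endo_funpow])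

lemma skew_mult_add_left:
  "alg_endo \<phi> \<Longrightarrow> skew_mult \<phi> (f + f') g = skew_mult \<phi> f g + skew_mult \<phi> f' g"
  by (rule poly_mapping_eqI) (simp add: lookup_skew_mult lookup_add distrib_right sum.distrib)

lemma skew_mult_sum_left:
  "alg_endo \<phi> \<Longrightarrow> skew_mult \<phi> (sum f A) g = (\<Sum>a\<in>A. skew_mult \<phi> (f a) g)"
  by (induction A rule: infinite_finite_induct)
    (simp_all add: skew_mult_zero_left skew_mult_add_left)

lemma skew_const_sum: "skew_const (sum f A) = (\<Sum>a\<in>A. skew_const (f a))"
  by (induction A rule: infinite_finite_induct) (simp_all add: skew_const_def single_add)

lemma lookup_Theta_minus_const:
  "Poly_Mapping.lookup (Theta - skew_const a) m = (if m = 1 then 1 else 0) - (if m = 0 then a else 0)"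
  by (simp add: Theta_def skew_const_def lookup_minus lookup_single when_def)

lemma S_act_eq_sum:
  assumes "finite A" "Poly_Mapping.keys r \<subseteq> A"
  shows "S_act \<phi> r p = (\<Sum>i\<in>A. Poly_Mapping.lookup r i * (\<phi> ^^ i) p)"
  unfolding S_act_def by (rule sum.mono_neutral_left) (use assms in \<open>auto simp: in_keys_iff\<close>)

lemma S_act_zero: "S_act \<phi> 0 p = 0"
  by (simp add: S_act_def)

lemma S_act_add: "S_act \<phi> (r + r') p = S_act \<phi> r p + S_act \<phi> r' p"
proof -
  let ?A = "Poly_Mapping.keys r \<union> Poly_Mapping.keys r'"
  have "Poly_Mapping.keys (r + r') \<subseteq> ?A"
    by (rule keys_add)
  then show ?thesis
    by (simp add: S_act_eq_sum[of ?A] lookup_add distrib_right sum.distrib)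
qed

lemma S_act_diff: "S_act \<phi> (r - r') p = S_act \<phi> r p - S_act \<phi> r' p"
  by (metis S_act_add eq_diff_eq)

lemma S_act_sum: "S_act \<phi> (sum f A) p = (\<Sum>a\<in>A. S_act \<phi> (f a) p)"
  by (induction A rule: infinite_finite_induct) (simp_all add: S_act_zero S_act_add)

lemma S_act_const: "S_act \<phi> (skew_const a) p = a * p"
  by (simp add: S_act_eq_sum[of "{0}"] skew_const_def)

lemma S_act_Theta: "S_act \<phi> Theta p = \<phi> p"
  by (simp add: S_act_eq_sum[of "{1}"] Theta_def)

lemma S_act_zero_right: "alg_endo \<phi> \<Longrightarrow> S_act \<phi> r 0 = 0"
  by (simp add: S_act_def alg_endo_zero[OF alg_endo_funpow])

lemma S_act_skew_mult:
  assumes e: "alg_endo \<phi>"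
  shows "S_act \<phi> (skew_mult \<phi> r g) p = S_act \<phi> r (S_act \<phi> g p)"
proof -
  obtain A B where "Poly_Mapping.keys r \<subseteq> {..<A}" "Poly_Mapping.keys g \<subseteq> {..<B}"
    using keys_subset_lessThan by blast
  then obtain N where rN: "Poly_Mapping.keys r \<subseteq> {..<N}" and gN: "Poly_Mapping.keys g \<subseteq> {..<N}"
    by (metis order_trans lessThan_subset_iff le_add1 le_add2)
  have "Poly_Mapping.keys (skew_mult \<phi> r g) \<subseteq> {..<N + N}"
    by (rule keys_skew_mult_subset[OF e rN gN])
  define h where "h i j = Poly_Mapping.lookup r i * (\<phi> ^^ i) (Poly_Mapping.lookup g j) * (\<phi> ^^ (i + j)) p"
    for i j
  have "S_act \<phi> (skew_mult \<phi> r g) p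
      = (\<Sum>k<N + N. \<Sum>i\<le>k. Poly_Mapping.lookup r i * (\<phi> ^^ i) (Poly_Mapping.lookup g (k - i)) * (\<phi> ^^ k) p)"
    by (simp add: S_act_eq_sum[OF _ \<open>_ \<subseteq> {..<N + N}\<close>] lookup_skew_mult[OF e] sum_distrib_right)
  also have "\<dots> = (\<Sum>k<N + N. \<Sum>i\<le>k. h i (k - i))"
    by (intro sum.cong) (simp_all add: h_def)
  also have "\<dots> = (\<Sum>(i, j)\<in>{(i, j). i + j < N + N}. h i j)"
    by (rule sum.triangle_reindex[symmetric])
  also have "\<dots> = (\<Sum>(i, j)\<in>{..<N} \<times> {..<N}. h i j)"
  proof (rule sum.mono_neutral_right)
    show "finite {(i, j). i + j < N + N}"
      by (rule finite_subset[of _ "{..<N + N} \<times> {..<N + N}"]) auto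
    have "h i j = 0" if "(i, j) \<notin> {..<N} \<times> {..<N}" for i j
    proof -
      have "i \<notin> Poly_Mapping.keys r \<or> j \<notin> Poly_Mapping.keys g"
        using that rN gN by auto
      then show ?thesis
        by (auto simp: h_def in_keys_iff alg_endo_zero[OF alg_endo_funpow[OF e]])
    qed
    then show "\<forall>x\<in>{(i, j). i + j < N + N} - {..<N} \<times> {..<N}. (case x of (i, j) \<Rightarrow> h i j) = 0"
      by auto
  qed auto
  also have "\<dots> = (\<Sum>i<N. \<Sum>j<N. h i j)"
    by (rule sum.cartesian_product[symmetric])
  also have "\<dots> = S_act \<phi> r (S_act \<phi> g p)"
    using alg_endo_funpow[OF e]
    by (simp add: S_act_eq_sum[OF _ rN] S_act_eq_sum[OF _ gN] alg_endo_sum alg_endo_mult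
        sum_distrib_left h_def funpow_add mult.assoc)
  finally show ?thesis .
qed

lemma skew_mult_single_Theta_minus_one:
  assumes e: "alg_endo \<phi>"
  shows "skew_mult \<phi> (Poly_Mapping.single i a) (Theta - skew_const 1)
       = Poly_Mapping.single (Suc i) a - Poly_Mapping.single i a"
proof (rule poly_mapping_eqI)
  fix k
  have "Poly_Mapping.lookup (skew_mult \<phi> (Poly_Mapping.single i a) (Theta - skew_const 1)) k
      = (\<Sum>j\<le>k. if j = i then a * (\<phi> ^^ i) (Poly_Mapping.lookup (Theta - skew_const 1) (k - i)) else 0)"
    unfolding lookup_skew_mult[OF e] by (rule sum.cong) (simp_all add: lookup_single)
  also have "\<dots> = (if i \<le> k then a * (\<phi> ^^ i) ((if k - i = 1 then 1 else 0) - (if k - i = 0 then 1 else 0)) else 0)"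
    by (simp add: lookup_Theta_minus_const)
  also have "\<dots> = Poly_Mapping.lookup (Poly_Mapping.single (Suc i) a - Poly_Mapping.single i a) k"
    using alg_endo_funpow[OF e]
    by (cases "k = i \<or> k = Suc i")
      (auto simp: lookup_minus lookup_single alg_endo_one alg_endo_zero
        alg_endo_uminus)
  finally show "Poly_Mapping.lookup (skew_mult \<phi> (Poly_Mapping.single i a) (Theta - skew_const 1)) k
      = Poly_Mapping.lookup (Poly_Mapping.single (Suc i) a - Poly_Mapping.single i a) k" .
qed

lemma skew_eq_mult_Theta_minus_one_plus_const:
  assumes e: "alg_endo \<phi>"
  shows "\<exists>q. g = skew_mult \<phi> q (Theta - skew_const 1) + skew_const (S_act \<phi> g 1)"
proof -
  obtain N where gN: "Poly_Mapping.keys g \<subseteq> {..<N}"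
    using keys_subset_lessThan by blast
  let ?g = "\<lambda>i. Poly_Mapping.lookup g i"
  have g_sum: "g = (\<Sum>i<N. Poly_Mapping.single i (?g i))"
    by (rule poly_mapping_eqI) (use gN in \<open>auto simp: lookup_sum lookup_single in_keys_iff when_def\<close>)
  have g_eval: "S_act \<phi> g 1 = (\<Sum>i<N. ?g i)"
    by (simp add: S_act_eq_sum[OF _ gN] alg_endo_one[OF alg_endo_funpow[OF e]])
  \<comment> \<open>q = \<Sum>_i g_i (1 + \<Theta> + ... + \<Theta>^(i-1))\<close>
  define q where "q = (\<Sum>i<N. \<Sum>j<i. Poly_Mapping.single j (?g i))"
  have "skew_mult \<phi> q (Theta - skew_const 1)
      = (\<Sum>i<N. \<Sum>j<i. Poly_Mapping.single (Suc j) (?g i) - Poly_Mapping.single j (?g i))"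
    by (simp add: q_def skew_mult_sum_left[OF e] skew_mult_single_Theta_minus_one[OF e])
  also have "\<dots> = (\<Sum>i<N. Poly_Mapping.single i (?g i) - skew_const (?g i))"
    unfolding skew_const_def by (rule sum.cong[OF refl], rule sum_lessThan_telescope)
  also have "\<dots> = g - skew_const (S_act \<phi> g 1)"
    by (simp add: sum_subtractf skew_const_sum g_eval flip: g_sum)
  finally show ?thesis
    by (metis diff_add_cancel)
qed

lemma dvd_funpow_self:
  assumes "alg_endo \<phi>" "x dvd \<phi> x"
  shows "x dvd (\<phi> ^^ i) x"
proof (induction i)
  case (Suc i)
  then obtain u where "(\<phi> ^^ i) x = x * u"
    by blast
  then show ?case
    using assms by (simp add: alg_endo_mult)
qed simp

lemma dvd_S_act_self: "alg_endo \<phi> \<Longrightarrow> x dvd \<phi> x \<Longrightarrow> x dvd S_act \<phi> r x"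
  unfolding S_act_def by (intro dvd_sum dvd_mult dvd_funpow_self)

lemma skew_mult_eq_0_unit_lead:
  assumes e: "alg_endo \<phi>"
    and h: "Poly_Mapping.keys h \<subseteq> {..m}" "Poly_Mapping.lookup h m * w = 1"
    and "skew_mult \<phi> f h = 0"
  shows "f = 0"
proof (rule ccontr)
  assume "f \<noteq> 0"
  define d where "d = Max (Poly_Mapping.keys f)"
  have d: "d \<in> Poly_Mapping.keys f" "\<And>i. i \<in> Poly_Mapping.keys f \<Longrightarrow> i \<le> d"
    using \<open>f \<noteq> 0\<close> by (simp_all add: d_def)
  \<comment> \<open>the coefficient of \<Theta>^(d+m) in f h is f_d \<phi>^d(h_m)\<close>
  have "(\<Sum>i\<le>d + m. Poly_Mapping.lookup f i * (\<phi> ^^ i) (Poly_Mapping.lookup h (d + m - i)))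
      = (\<Sum>i\<le>d + m. if i = d then Poly_Mapping.lookup f d * (\<phi> ^^ d) (Poly_Mapping.lookup h m) else 0)"
  proof (rule sum.cong[OF refl])
    fix i
    have "i \<notin> Poly_Mapping.keys f \<or> d + m - i \<notin> Poly_Mapping.keys h" if "i \<noteq> d"
      using that d(2) h(1) by fastforce
    then show "Poly_Mapping.lookup f i * (\<phi> ^^ i) (Poly_Mapping.lookup h (d + m - i))
        = (if i = d then Poly_Mapping.lookup f d * (\<phi> ^^ d) (Poly_Mapping.lookup h m) else 0)"
      by (auto simp: in_keys_iff alg_endo_zero[OF alg_endo_funpow[OF e]])
  qed
  then have "Poly_Mapping.lookup f d * (\<phi> ^^ d) (Poly_Mapping.lookup h m) = 0"
    using \<open>skew_mult \<phi> f h = 0\<close> by (simp add: lookup_skew_mult[OF e, symmetric])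
  then have "Poly_Mapping.lookup f d * ((\<phi> ^^ d) (Poly_Mapping.lookup h m) * (\<phi> ^^ d) w) = 0"
    by (simp add: mult.assoc[symmetric])
  then have "Poly_Mapping.lookup f d = 0"
    by (simp add: alg_endo_inverse[OF alg_endo_funpow[OF e] h(2)])
  with d(1) show False
    by (simp add: in_keys_iff)
qed

lemma sum_fun_apply: "sum f A x = (\<Sum>a\<in>A. f a x)"
  by (induction A rule: infinite_finite_induct) simp_all

lemma bd_apply: "bd \<phi> s c jx = (\<Sum>ix\<in>UNIV. skew_mult \<phi> (c ix) (bd_basis \<phi> s ix jx))"
  by (simp add: bd_def chain_smul_def sum_fun_apply)

lemma chain_smul_basis_vec:
  "alg_endo \<phi> \<Longrightarrow> chain_smul \<phi> r (basis_vec ix) jx = (if jx = ix then r else 0)"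
  by (simp add: chain_smul_def basis_vec_def skew_mult_const_one_right skew_mult_zero_right)

lemma bd_basis_singleton:
  assumes "alg_endo \<phi>"
  shows "bd_basis \<phi> s ({v}, False) jx = (if jx = ({}, False) then skew_const (Var v) else 0)"
proof -
  have no_smaller: "{j. j = v \<and> j < v} = {}"
    by auto
  show ?thesis
    by (simp add: bd_basis_def chain_smul_basis_vec[OF assms] sgn_pos_def no_smaller)
qed

lemma bd_basis_u:
  "alg_endo \<phi> \<Longrightarrow> bd_basis \<phi> s ({}, True) jx = (if jx = ({}, False) then Theta - skew_const 1 else 0)"
  by (simp add: bd_basis_def chain_smul_basis_vec s_prod_def skew_mult_const_one_left)

lemma bd_basis_top:
  fixes \<phi> :: "('v::{finite,linorder}, 'k::comm_ring_1) mpoly \<Rightarrow> ('v, 'k) mpoly"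
  assumes "alg_endo \<phi>"
  shows "bd_basis \<phi> s (UNIV, True) (UNIV, False)
       = skew_mult \<phi> (skew_const ((-1) ^ card (UNIV :: 'v set))) (Theta - skew_const (s_prod s UNIV))"
  by (simp add: bd_basis_def chain_smul_basis_vec[OF assms] sum_fun_apply)

lemma FK_0_eq:
  fixes a :: "('v::finite, 'k::comm_ring_1) chain"
  assumes "a \<in> FK 0"
  shows "a = (\<lambda>jx. if jx = ({}, False) then a ({}, False) else 0)"
proof
  fix jx :: "'v set \<times> bool"
  have "jx = ({}, False)" if "a jx \<noteq> 0"
  proof -
    have "bdeg jx = 0"
      using assms that unfolding FK_def by blast
    then show ?thesis
      by (cases jx) (simp add: bdeg_def split: if_splits)
  qed
  then show "a jx = (if jx = ({}, False) then a ({}, False) else 0)"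
    by auto
qed

lemma bdeg_eq_1D:
  assumes "bdeg (ix :: 'v::finite set \<times> bool) = 1"
  shows "ix \<in> range (\<lambda>v. ({v}, False)) \<union> {({}, True)}"
proof (cases ix)
  case (Pair J b)
  then show ?thesis
  proof (cases b)
    case True
    then show ?thesis
      using assms Pair by (simp add: bdeg_def)
  next
    case False
    then have "card J = 1"
      using assms Pair by (simp add: bdeg_def)
    then show ?thesis
      using Pair False by (auto simp: card_Suc_eq)
  qed
qed

lemma bd_FK_1:
  fixes \<phi> :: "('v::{finite,linorder}, 'k::comm_ring_1) mpoly \<Rightarrow> ('v, 'k) mpoly"
  assumes e: "alg_endo \<phi>" and c: "c \<in> FK 1"
  shows "bd \<phi> s c = (\<lambda>jx. if jx = ({}, False)
           then (\<Sum>v\<in>UNIV. skew_mult \<phi> (c ({v}, False)) (skew_const (Var v)))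
              + skew_mult \<phi> (c ({}, True)) (Theta - skew_const 1)
           else 0)"
proof
  fix jx
  let ?T = "range (\<lambda>v::'v. ({v}, False)) \<union> {({}, True)}"
  have "c ix = 0" if "ix \<notin> ?T" for ix
    using c bdeg_eq_1D[of ix] that unfolding FK_def by blast
  then have "bd \<phi> s c jx = (\<Sum>ix\<in>?T. skew_mult \<phi> (c ix) (bd_basis \<phi> s ix jx))"
    unfolding bd_apply by (intro sum.mono_neutral_right) (auto simp: skew_mult_zero_left[OF e])
  also have "\<dots> = (\<Sum>v\<in>UNIV. skew_mult \<phi> (c ({v}, False)) (bd_basis \<phi> s ({v}, False) jx))
      + skew_mult \<phi> (c ({}, True)) (bd_basis \<phi> s ({}, True) jx)"
    by (subst sum.union_disjoint) (auto simp: sum.reindex inj_on_def)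
  finally show "bd \<phi> s c jx = (if jx = ({}, False)
      then (\<Sum>v\<in>UNIV. skew_mult \<phi> (c ({v}, False)) (skew_const (Var v)))
        + skew_mult \<phi> (c ({}, True)) (Theta - skew_const 1)
      else 0)"
    by (simp add: bd_basis_singleton[OF e] bd_basis_u[OF e] skew_mult_zero_right[OF e])
qed

lemma bd_FK_1_image_iff:
  fixes \<phi> :: "('v::{finite,linorder}, 'k::comm_ring_1) mpoly \<Rightarrow> ('v, 'k) mpoly"
  assumes e: "alg_endo \<phi>" and var: "\<And>v. Var v dvd \<phi> (Var v)" and a: "a \<in> FK 0"
  shows "a \<in> bd \<phi> s ` FK 1 \<longleftrightarrow> S_act \<phi> (a ({}, False)) 1 \<in> var_ideal"
proof
  assume "a \<in> bd \<phi> s ` FK 1"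
  then obtain c where c: "c \<in> FK 1" and a_eq: "a = bd \<phi> s c"
    by blast
  have "\<forall>v. \<exists>t. S_act \<phi> (c ({v}, False)) (Var v) = Var v * t"
    using dvd_S_act_self[OF e var] by (simp add: dvd_def)
  then obtain t where t: "\<And>v. S_act \<phi> (c ({v}, False)) (Var v) = Var v * t v"
    by metis
  have "S_act \<phi> (a ({}, False)) 1 = (\<Sum>v\<in>UNIV. t v * Var v)"
    by (simp add: a_eq bd_FK_1[OF e c] S_act_add S_act_sum S_act_skew_mult[OF e] S_act_const
        S_act_diff S_act_Theta alg_endo_one[OF e] S_act_zero_right[OF e] t mult.commute)
  then show "S_act \<phi> (a ({}, False)) 1 \<in> var_ideal"
    unfolding var_ideal_def by blast
next
  assume "S_act \<phi> (a ({}, False)) 1 \<in> var_ideal"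
  then obtain b where b: "S_act \<phi> (a ({}, False)) 1 = (\<Sum>v\<in>UNIV. b v * Var v)"
    unfolding var_ideal_def by blast
  obtain q where q: "a ({}, False) = skew_mult \<phi> q (Theta - skew_const 1) + skew_const (S_act \<phi> (a ({}, False)) 1)"
    using skew_eq_mult_Theta_minus_one_plus_const[OF e] by blast
  define c :: "('v, 'k) chain" where "c ix =
      (if ix = ({}, True) then q
       else if \<not> snd ix \<and> card (fst ix) = 1 then skew_const (b (the_elem (fst ix))) else 0)" for ix
  have c: "c \<in> FK 1"
    by (auto simp: FK_def bdeg_def c_def)
  have c_vars: "(\<Sum>v\<in>UNIV. skew_mult \<phi> (c ({v}, False)) (skew_const (Var v)))
      = skew_const (S_act \<phi> (a ({}, False)) 1)"
    by (simp add: c_def skew_mult_const_const[OF e] b skew_const_sum)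
  have c_u: "c ({}, True) = q"
    by (simp add: c_def)
  have "bd \<phi> s c = (\<lambda>jx. if jx = ({}, False)
      then skew_const (S_act \<phi> (a ({}, False)) 1) + skew_mult \<phi> q (Theta - skew_const 1) else 0)"
    unfolding bd_FK_1[OF e c] c_vars c_u ..
  then have "bd \<phi> s c = (\<lambda>jx. if jx = ({}, False) then a ({}, False) else 0)"
    by (metis q add.commute)
  with c FK_0_eq[OF a] show "a \<in> bd \<phi> s ` FK 1"
    by (metis image_eqI)
qed

lemma zero_in_var_ideal: "0 \<in> var_ideal"
  unfolding var_ideal_def by (rule CollectI, rule exI[of _ "\<lambda>_. 0"]) simp

lemma quot_iso_H_0:
  fixes \<phi> :: "('v::{finite,linorder}, 'k::comm_ring_1) mpoly \<Rightarrow> ('v, 'k) mpoly"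
  assumes e: "alg_endo \<phi>" and var: "\<And>v. Var v dvd \<phi> (Var v)"
  shows "quot_iso (FK 0) (bd \<phi> s ` FK 1) (chain_smul \<phi>) UNIV var_ideal (S_act \<phi>)"
  unfolding quot_iso_def
proof (intro exI[of _ "\<lambda>a. S_act \<phi> (a ({}, False)) 1"] conjI ballI allI)
  fix a b :: "('v, 'k) chain"
  show "S_act \<phi> ((a + b) ({}, False)) 1 - (S_act \<phi> (a ({}, False)) 1 + S_act \<phi> (b ({}, False)) 1)
      \<in> var_ideal"
    by (simp add: S_act_add zero_in_var_ideal)
next
  fix r and a :: "('v, 'k) chain"
  show "S_act \<phi> (chain_smul \<phi> r a ({}, False)) 1 - S_act \<phi> r (S_act \<phi> (a ({}, False)) 1) \<in> var_ideal"
    by (simp add: chain_smul_def S_act_skew_mult[OF e] zero_in_var_ideal)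
next
  fix a :: "('v, 'k) chain"
  assume "a \<in> FK 0"
  then show "S_act \<phi> (a ({}, False)) 1 \<in> var_ideal \<longleftrightarrow> a \<in> bd \<phi> s ` FK 1"
    using bd_FK_1_image_iff[OF e var] by blast
next
  fix p :: "('v, 'k) mpoly"
  let ?a = "\<lambda>jx. if jx = ({}, False) then skew_const p else 0"
  have "S_act \<phi> (?a ({}, False)) 1 - p \<in> var_ideal"
    by (simp add: S_act_const zero_in_var_ideal)
  moreover have "?a \<in> FK 0"
    by (simp add: FK_def bdeg_def)
  ultimately show "\<exists>a\<in>FK 0. S_act \<phi> (a ({}, False)) 1 - p \<in> var_ideal"
    by (rule bexI)
qed simp

lemma FK_top_support:
  fixes c :: "('v::finite, 'k::comm_ring_1) chain"
  assumes "c \<in> FK (card (UNIV :: 'v::finite set) + 1)" "c ix \<noteq> 0"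
  shows "ix = (UNIV, True)"
proof (cases ix)
  case (Pair J b)
  have "bdeg ix = card (UNIV :: 'v set) + 1"
    using assms unfolding FK_def by blast
  moreover have "card J \<le> card (UNIV :: 'v set)"
    by (rule card_mono) simp_all
  ultimately have "b \<and> card J = card (UNIV :: 'v set)"
    using Pair by (auto simp: bdeg_def split: if_splits)
  then show ?thesis
    using Pair card_subset_eq[of UNIV J] by auto
qed

lemma bd_FK_top_injective:
  fixes \<phi> :: "('v::{finite,linorder}, 'k::comm_ring_1) mpoly \<Rightarrow> ('v, 'k) mpoly"
  assumes e: "alg_endo \<phi>" and c: "c \<in> FK (card (UNIV :: 'v set) + 1)" and "bd \<phi> s c = 0"
  shows "c = 0"
proof -
  define \<epsilon> :: "('v, 'k) mpoly" where "\<epsilon> = (-1) ^ card (UNIV :: 'v set)"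
  define h where "h = bd_basis \<phi> s (UNIV, True) (UNIV, False)"
  have h_coeff: "Poly_Mapping.lookup h m = \<epsilon> * ((if m = 1 then 1 else 0) - (if m = 0 then s_prod s UNIV else 0))"
    for m
    by (simp add: h_def \<epsilon>_def bd_basis_top[OF e] lookup_skew_mult_const_left[OF e] lookup_Theta_minus_const)
  have "Poly_Mapping.keys h \<subseteq> {..1}"
    by (auto simp: in_keys_iff h_coeff split: if_splits)
  moreover have "Poly_Mapping.lookup h 1 * \<epsilon> = 1"
    by (simp add: h_coeff \<epsilon>_def flip: power_add)
  moreover have "skew_mult \<phi> (c (UNIV, True)) h = bd \<phi> s c (UNIV, False)"
  proof -
    have "c ix = 0" if "ix \<noteq> (UNIV, True)" for ix
      using FK_top_support[OF c] that by blast
    then show ?thesis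
      unfolding bd_apply h_def
      by (subst sum.remove[of _ "(UNIV, True)"]) (simp_all add: skew_mult_zero_left[OF e])
  qed
  ultimately have "c (UNIV, True) = 0"
    using skew_mult_eq_0_unit_lead[OF e] \<open>bd \<phi> s c = 0\<close> by simp
  then show "c = 0"
    using FK_top_support[OF c] by fastforce
qed

theorem proposition3:
  fixes \<phi> :: "('v::{finite,linorder}, 'k::comm_ring_1) mpoly \<Rightarrow> ('v, 'k) mpoly"
    and s :: "'v \<Rightarrow> ('v, 'k) mpoly"
  assumes "alg_endo \<phi>"
    and "flat_endo \<phi>"
    and "\<And>v. s v \<noteq> 0"
    and "\<And>v. \<phi> (Var v) = s v * Var v"
  shows "quot_iso (FK 0) (bd \<phi> s ` FK 1) (chain_smul \<phi>) UNIV var_ideal (S_act \<phi>)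
         \<and> (\<forall>c\<in>FK (card (UNIV :: 'v set) + 1). bd \<phi> s c = 0 \<longrightarrow> c = 0)"
proof
  have "Var v dvd \<phi> (Var v)" for v
    using assms(4) by simp
  then show "quot_iso (FK 0) (bd \<phi> s ` FK 1) (chain_smul \<phi>) UNIV var_ideal (S_act \<phi>)"
    by (rule quot_iso_H_0[OF assms(1)])
  show "\<forall>c\<in>FK (card (UNIV :: 'v set) + 1). bd \<phi> s c = 0 \<longrightarrow> c = 0"
    using bd_FK_top_injective[OF assms(1)] by blast
qed

end
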